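(* Let $\Omega=\{z\in\mathbb{C}^n \mid r(z)<0\}$ be a bounded domain with $C^{1,1}$-smooth boundary, where $r$ is a $C^{1,1}$ defining function with $dr\neq 0$ on $b\Omega$. Then there exists a constant $C>0$ such that \[ F^K_\Omega(z,X)\ge C\frac{|\langle\partial r(z),X\rangle|}{|r(z)|^{1/2}} \] for all $z\in\Omega$ and all $X\in\mathbb{C}^n$.
   Context: $\langle\partial r(z),X\rangle=\sum_{j=1}^n \frac{\partial r}{\partial z_j}(z)X_j$. For a domain $\Omega\subset\mathbb{C}^n$, $z\in\Omega$ and $X\in\mathbb{C}^n$, the Kobayashi(–Royden) metric is $F^K_\Omega(z,X)=\inf\{1/\lambda \mid \exists f\colon D\to\Omega \text{ holomorphic},\ f(0)=z,\ f'(0)=\lambda X,\ \lambda>0\}$, where $D$ is the unit disc in $\mathbb{C}$. *)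

theory Defs
  imports "HOL-Complex_Analysis.Complex_Analysis"
begin

definition holo_disc_map :: "(complex \<Rightarrow> complex^'n) \<Rightarrow> bool" where
  "holo_disc_map f \<longleftrightarrow> (\<forall>j. (\<lambda>w. f w $ j) holomorphic_on ball 0 1)"

definition kobayashi :: "(complex^'n) set \<Rightarrow> complex^'n \<Rightarrow> complex^'n \<Rightarrow> real" where
  "kobayashi \<Omega> z X = Inf {1 / l | l. l > 0 \<and>
      (\<exists>f. holo_disc_map f \<and> f ` ball 0 1 \<subseteq> \<Omega> \<and> f 0 = z \<and>
           (\<chi> j. deriv (\<lambda>w. f w $ j) 0) = (\<chi> j. complex_of_real l * X $ j))}"

text \<open>The pairing \<open>\<langle>\<partial>r(z),X\<rangle> = \<Sum>j (\<partial>r/\<partial>z_j)(z) X_j\<close> for a real function r,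
  with \<open>\<partial>r/\<partial>z_j = (\<partial>r/\<partial>x_j - i \<partial>r/\<partial>y_j)/2\<close>.\<close>
definition dz_pair :: "(complex^'n \<Rightarrow> real) \<Rightarrow> complex^'n \<Rightarrow> complex^'n \<Rightarrow> complex" where
  "dz_pair r z X = (\<Sum>j\<in>UNIV.
      (complex_of_real (frechet_derivative r (at z) (axis j 1))
        - \<i> * complex_of_real (frechet_derivative r (at z) (axis j \<i>))) / 2 * X $ j)"

definition C11_on :: "(complex^'n) set \<Rightarrow> (complex^'n \<Rightarrow> real) \<Rightarrow> bool" where
  "C11_on U r \<longleftrightarrow> (\<forall>z\<in>U. r differentiable (at z)) \<and>
     (\<exists>L. \<forall>z\<in>U. \<forall>w\<in>U.
        onorm (\<lambda>v. frechet_derivative r (at z) v - frechet_derivative r (at w) v) \<le> L * dist z w)"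

end

theory Submission
  imports Defs
begin

(* Let f be a holomorphic disc in \<Omega> through z with f'(0) = l X, and let a = \<langle>\<partial>r(z),X\<rangle>.
   Cauchy estimates control f to second order on |t| \<le> 1/4, and r has a Lipschitz gradient,
   so for |t| = s, with t rotated so that t a = s |a|,
     0 > r(f t) \<ge> r(z) + 2 l s |a| - C s\<^sup>2.
   Choosing s of order |r(z)|^(1/2) gives l |a| \<le> K |r(z)|^(1/2), i.e. a lower bound on 1/l.
   Only boundedness of \<Omega> and the C^{1,1} regularity of r enter. *)

lemma norm_le_sum_norm_nth: "norm (x :: 'a::real_normed_vector ^'n) \<le> (\<Sum>i\<in>UNIV. norm (x $ i))"
  unfolding norm_vec_def by (rule L2_set_le_sum) simp

lemma bounded_holomorphic_higher_deriv_bound: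
  fixes g :: "complex \<Rightarrow> complex"
  assumes hol: "g holomorphic_on S" and bd: "\<And>w. w \<in> S \<Longrightarrow> cmod (g w) \<le> R"
    and sub: "cball x \<rho> \<subseteq> S" and "open S" and "\<rho> > 0" and "n > 0"
  shows "cmod ((deriv ^^ n) g x) \<le> fact n * (R + 1) / \<rho> ^ n"
proof (rule Cauchy_higher_deriv_bound)
  show "g holomorphic_on ball x \<rho>"
    using hol sub ball_subset_cball by (meson holomorphic_on_subset order_trans)
  show "continuous_on (cball x \<rho>) g"
    using holomorphic_on_imp_continuous_on[OF hol] sub continuous_on_subset by blast
  show "g w \<in> ball 0 (R + 1)" if "w \<in> ball x \<rho>" for w
  proof -
    have "w \<in> S" using that sub ball_subset_cball by blast
    then show ?thesis using bd[of w] by simp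
  qed
qed (use assms in auto)

lemma bounded_holomorphic_disc_estimates:
  fixes g :: "complex \<Rightarrow> complex"
  assumes hol: "g holomorphic_on ball 0 1" and bd: "\<And>w. w \<in> ball 0 1 \<Longrightarrow> cmod (g w) \<le> R"
    and t: "cmod t \<le> 1/4"
  shows "cmod (g t - g 0 - deriv g 0 * t) \<le> 8 * (R + 1) * (cmod t)\<^sup>2"
    and "cmod (g t - g 0) \<le> 4 * (R + 1) * cmod t"
proof -
  have R: "R + 1 \<ge> 0" using order_trans[OF norm_ge_zero bd[of 0]] by simp
  have hd: "deriv g holomorphic_on ball 0 1" by (rule holomorphic_deriv[OF hol]) simp
  have cball_sub: "cball x (1/2) \<subseteq> ball 0 1" if "x \<in> cball 0 (1/4)" for x :: complex
  proof
    fix y assume "y \<in> cball x (1/2)"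
    then have "norm (y - x) \<le> 1/2" by (simp add: dist_norm norm_minus_commute)
    moreover have "norm y \<le> norm x + norm (y - x)" by (metis add.commute diff_add_cancel norm_triangle_ineq)
    ultimately show "y \<in> ball 0 1" using that by simp
  qed
  have second_deriv: "cmod (deriv (deriv g) x) \<le> 8 * (R + 1)" if "x \<in> cball 0 (1/4)" for x
  proof -
    have "cmod ((deriv ^^ 2) g x) \<le> fact 2 * (R + 1) / (1/2)\<^sup>2"
      by (rule bounded_holomorphic_higher_deriv_bound[OF hol bd cball_sub[OF that]]) auto
    then show ?thesis by (simp add: numeral_2_eq_2)
  qed
  have "cmod (([g, deriv g, deriv (deriv g)] ! 0) t
          - (\<Sum>i\<le>1. ([g, deriv g, deriv (deriv g)] ! i) 0 * (t - 0) ^ i / fact i))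
        \<le> 8 * (R + 1) * cmod (t - 0) ^ Suc 1 / fact 1"
  proof (rule complex_Taylor[OF convex_cball])
    fix i :: nat and x :: complex assume "x \<in> cball 0 (1/4)" and "i \<le> 1"
    then have x: "x \<in> ball 0 1" and "i = 0 \<or> i = 1" by auto
    then show "(([g, deriv g, deriv (deriv g)] ! i) has_field_derivative
                 ([g, deriv g, deriv (deriv g)] ! Suc i) x) (at x within cball 0 (1/4))"
      using holomorphic_derivI[OF hol open_ball x] holomorphic_derivI[OF hd open_ball x]
      by (auto intro: has_field_derivative_at_within)
  next
    show "cmod (([g, deriv g, deriv (deriv g)] ! Suc 1) x) \<le> 8 * (R + 1)" if "x \<in> cball 0 (1/4)" for x
      using second_deriv[OF that] by simp
  qed (use t in simp_all)
  then show quad: "cmod (g t - g 0 - deriv g 0 * t) \<le> 8 * (R + 1) * (cmod t)\<^sup>2"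
    by (simp add: algebra_simps power2_eq_square)
  have "cmod ((deriv ^^ 1) g 0) \<le> fact 1 * (R + 1) / (1/2) ^ 1"
    by (rule bounded_holomorphic_higher_deriv_bound[OF hol bd cball_sub]) auto
  then have linear_term: "cmod (deriv g 0 * t) \<le> 2 * (R + 1) * cmod t"
    using R by (simp add: norm_mult mult_right_mono)
  have "(R + 1) * (cmod t * cmod t) \<le> (R + 1) * (cmod t * (1/4))"
    using t R by (intro mult_left_mono) auto
  then have "8 * (R + 1) * (cmod t)\<^sup>2 \<le> 2 * (R + 1) * cmod t"
    by (simp add: power2_eq_square algebra_simps)
  moreover have "cmod (g t - g 0) \<le> cmod (g t - g 0 - deriv g 0 * t) + cmod (deriv g 0 * t)"
    using norm_triangle_ineq[of "g t - g 0 - deriv g 0 * t" "deriv g 0 * t"] by simp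
  ultimately show "cmod (g t - g 0) \<le> 4 * (R + 1) * cmod t"
    using quad linear_term by linarith
qed

lemma norm_le_card_mult:
  fixes x :: "'a::real_normed_vector ^'n" and c :: real
  assumes "\<And>j. norm (x $ j) \<le> c"
  shows "norm x \<le> CARD('n) * c"
proof -
  have "norm x \<le> (\<Sum>j\<in>UNIV. norm (x $ j))" by (rule norm_le_sum_norm_nth)
  also have "\<dots> \<le> (\<Sum>j\<in>(UNIV::'n set). c)" by (rule sum_mono) (rule assms)
  finally show ?thesis by simp
qed

lemma holo_disc_map_estimates:
  fixes f :: "complex \<Rightarrow> complex^'n" and R :: real
  assumes hf: "holo_disc_map f" and bd: "\<And>w. w \<in> ball 0 1 \<Longrightarrow> norm (f w) \<le> R"
    and t: "cmod t \<le> 1/4"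
  shows "norm (f t - f 0) \<le> CARD('n) * (4 * (R + 1)) * cmod t"
    and "norm (f t - f 0 - t *s (\<chi> j. deriv (\<lambda>w. f w $ j) 0))
           \<le> CARD('n) * (8 * (R + 1)) * (cmod t)\<^sup>2"
proof -
  have hol: "(\<lambda>w. f w $ j) holomorphic_on ball 0 1" for j
    using hf unfolding holo_disc_map_def by blast
  have bdj: "cmod (f w $ j) \<le> R" if "w \<in> ball 0 1" for j w
    using order_trans[OF Finite_Cartesian_Product.norm_nth_le bd[OF that]] .
  note estimates = bounded_holomorphic_disc_estimates[OF hol bdj t]
  have "norm (f t - f 0) \<le> CARD('n) * (4 * (R + 1) * cmod t)"
    by (rule norm_le_card_mult) (use estimates(2) in simp)
  then show "norm (f t - f 0) \<le> CARD('n) * (4 * (R + 1)) * cmod t"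
    by (simp only: mult.assoc)
  have "norm (f t - f 0 - t *s (\<chi> j. deriv (\<lambda>w. f w $ j) 0))
          \<le> CARD('n) * (8 * (R + 1) * (cmod t)\<^sup>2)"
    by (rule norm_le_card_mult) (use estimates(1) in \<open>simp add: mult.commute\<close>)
  then show "norm (f t - f 0 - t *s (\<chi> j. deriv (\<lambda>w. f w $ j) 0))
          \<le> CARD('n) * (8 * (R + 1)) * (cmod t)\<^sup>2"
    by (simp only: mult.assoc)
qed

definition derivative_Lipschitz_on ::
    "'a::real_normed_vector set \<Rightarrow> ('a \<Rightarrow> real) \<Rightarrow> real \<Rightarrow> bool" where
  "derivative_Lipschitz_on U r L \<longleftrightarrow> (\<forall>z\<in>U. \<forall>w\<in>U.
     onorm (\<lambda>v. frechet_derivative r (at z) v - frechet_derivative r (at w) v) \<le> L * dist z w)"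

lemma Lipschitz_derivative_remainder_bound:
  fixes r :: "'a::euclidean_space \<Rightarrow> real"
  assumes diff: "\<forall>z\<in>U. r differentiable (at z)"
    and lip: "derivative_Lipschitz_on U r L"
    and L: "L \<ge> 0" and seg: "closed_segment x y \<subseteq> U"
  shows "\<bar>r y - r x - frechet_derivative r (at x) (y - x)\<bar> \<le> L * (norm (y - x))\<^sup>2"
proof -
  define D where "D = frechet_derivative r (at x)"
  have "x \<in> U" using seg by auto
  then have "bounded_linear D"
    using diff frechet_derivative_works has_derivative_bounded_linear D_def by blast
  have deriv: "((\<lambda>w. r w - D w) has_derivative (\<lambda>v. frechet_derivative r (at w) v - D v))
                 (at w within closed_segment x y)" if "w \<in> closed_segment x y" for w
    using diff seg that frechet_derivative_works
    by (blast intro: has_derivative_at_withinI has_derivative_diff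
        bounded_linear_imp_has_derivative[OF \<open>bounded_linear D\<close>])
  have bound: "onorm (\<lambda>v. frechet_derivative r (at w) v - D v) \<le> L * norm (y - x)"
    if "w \<in> closed_segment x y" for w
  proof -
    have "onorm (\<lambda>v. frechet_derivative r (at w) v - D v) \<le> L * dist w x"
      using lip seg that \<open>x \<in> U\<close> unfolding D_def derivative_Lipschitz_on_def by blast
    also have "\<dots> \<le> L * norm (y - x)"
      using dist_in_closed_segment[OF that] L by (simp add: dist_norm norm_minus_commute mult_left_mono)
    finally show ?thesis .
  qed
  have "norm ((r y - D y) - (r x - D x)) \<le> L * norm (y - x) * norm (y - x)"
    by (rule differentiable_bound[OF convex_closed_segment deriv bound]) auto
  moreover have "D y - D x = D (y - x)"
    using \<open>bounded_linear D\<close> by (simp add: linear_diff bounded_linear.linear)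
  ultimately show ?thesis unfolding D_def[symmetric] by (simp add: power2_eq_square algebra_simps)
qed

lemma frechet_derivative_eq_Re_dz_pair:
  fixes r :: "complex^'n \<Rightarrow> real"
  assumes "r differentiable (at z)"
  shows "frechet_derivative r (at z) w = Re (2 * dz_pair r z w)"
proof -
  define D where "D = frechet_derivative r (at z)"
  have lin: "linear D"
    using assms frechet_derivative_works has_derivative_linear D_def by blast
  have w: "w = (\<Sum>j\<in>UNIV. Re (w$j) *\<^sub>R axis j 1 + Im (w$j) *\<^sub>R axis j \<i>)"
    by (simp add: vec_eq_iff axis_def complex_eq_iff if_distrib cong: if_cong)
  have "D w = (\<Sum>j\<in>UNIV. Re (w$j) * D (axis j 1) + Im (w$j) * D (axis j \<i>))"
    by (subst w) (simp add: linear_sum[OF lin] linear_add[OF lin] linear_scale[OF lin])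
  also have "\<dots> = Re (2 * dz_pair r z w)"
    unfolding dz_pair_def D_def[symmetric]
    by (auto simp: sum_distrib_left Re_sum algebra_simps intro!: sum.cong)
  finally show ?thesis unfolding D_def .
qed

lemma dz_pair_scale: "dz_pair r z (c *s X) = c * dz_pair r z X"
  unfolding dz_pair_def sum_distrib_left by (simp add: mult_ac)

lemma exists_unimodular_mult_eq_norm: "\<exists>u. cmod u = 1 \<and> u * a = complex_of_real (cmod a)"
proof (cases "a = 0")
  case False
  have "cnj a / cmod a * a = complex_of_real ((cmod a)\<^sup>2) / cmod a"
    unfolding complex_norm_square by (simp add: mult.commute)
  also have "\<dots> = complex_of_real (cmod a)"
    using False by (simp add: power2_eq_square)
  finally show ?thesis
    using False by (intro exI[of _ "cnj a / cmod a"]) (simp add: norm_divide)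
qed (intro exI[of _ 1], simp)

definition disc_speeds :: "(complex^'n) set \<Rightarrow> complex^'n \<Rightarrow> complex^'n \<Rightarrow> real set" where
  "disc_speeds \<Omega> z X = {l. l > 0 \<and>
      (\<exists>f. holo_disc_map f \<and> f ` ball 0 1 \<subseteq> \<Omega> \<and> f 0 = z \<and>
           (\<chi> j. deriv (\<lambda>w. f w $ j) 0) = complex_of_real l *s X)}"

lemma kobayashi_eq_Inf_disc_speeds:
  "kobayashi \<Omega> z X = Inf ((\<lambda>l. 1 / l) ` disc_speeds \<Omega> z X)"
proof -
  have "(\<chi> j. complex_of_real l * X $ j) = complex_of_real l *s X" for l
    by (simp add: vec_eq_iff)
  then show ?thesis
    unfolding kobayashi_def disc_speeds_def setcompr_eq_image by simp
qed

lemma disc_speeds_nonempty: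
  assumes "z \<in> interior \<Omega>"
  shows "disc_speeds \<Omega> z X \<noteq> {}"
proof -
  obtain \<rho> where "\<rho> > 0" and ball: "ball z \<rho> \<subseteq> \<Omega>"
    using assms by (meson mem_interior)
  define S where "S = (\<Sum>j\<in>UNIV. cmod (X $ j))"
  define c where "c = \<rho> / (S + 1)"
  have "S \<ge> 0" by (simp add: S_def sum_nonneg)
  then have "c > 0" and "c * S < \<rho>"
    using \<open>\<rho> > 0\<close> by (auto simp: c_def field_simps)
  define f where "f w = z + (w * complex_of_real c) *s X" for w
  have "holo_disc_map f"
    unfolding holo_disc_map_def f_def by (auto intro!: holomorphic_intros)
  moreover have "f w \<in> \<Omega>" if "cmod w < 1" for w
  proof -
    have "norm (f w - z) \<le> (\<Sum>j\<in>UNIV. cmod w * c * cmod (X $ j))"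
      using norm_le_sum_norm_nth[of "f w - z"] \<open>c > 0\<close> by (simp add: f_def norm_mult)
    also have "\<dots> \<le> c * S"
      using that \<open>c > 0\<close> \<open>S \<ge> 0\<close>
      by (simp add: S_def sum_distrib_left[symmetric] mult_left_le_one_le mult.assoc)
    finally show ?thesis
      using \<open>c * S < \<rho>\<close> ball by (auto simp: dist_norm norm_minus_commute)
  qed
  moreover have "((\<lambda>w. f w $ j) has_field_derivative complex_of_real c * X $ j) (at 0)" for j
    unfolding f_def by (auto intro!: derivative_eq_intros)
  then have "(\<chi> j. deriv (\<lambda>w. f w $ j) 0) = complex_of_real c *s X"
    by (simp add: vec_eq_iff DERIV_imp_deriv)
  ultimately have "c \<in> disc_speeds \<Omega> z X"
    using \<open>c > 0\<close> by (auto simp: disc_speeds_def f_def)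
  then show ?thesis by blast
qed

lemma kobayashi_ge_divide:
  assumes "z \<in> interior \<Omega>" and "B > 0"
    and bound: "\<And>l. l \<in> disc_speeds \<Omega> z X \<Longrightarrow> l * A \<le> B"
  shows "A / B \<le> kobayashi \<Omega> z X"
  unfolding kobayashi_eq_Inf_disc_speeds
proof (rule cInf_greatest)
  show "(\<lambda>l. 1 / l) ` disc_speeds \<Omega> z X \<noteq> {}"
    using disc_speeds_nonempty[OF assms(1)] by blast
next
  fix x assume "x \<in> (\<lambda>l. 1 / l) ` disc_speeds \<Omega> z X"
  then obtain l where l: "l \<in> disc_speeds \<Omega> z X" and x: "x = 1 / l" by blast
  have "l > 0" using l by (simp add: disc_speeds_def)
  then show "A / B \<le> x"
    using bound[OF l] \<open>B > 0\<close> by (simp add: x field_simps)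
qed

text \<open>Test \<open>r < 0\<close> at the point \<open>f t\<close>, with \<open>t\<close> of modulus \<open>s\<close> turned so that the first-order
  term \<open>2 Re (l t \<langle>\<partial>r(z),X\<rangle>)\<close> is \<open>2 l s |\<langle>\<partial>r(z),X\<rangle>|\<close>.\<close>
lemma disc_speed_quadratic_bound:
  fixes r :: "complex^'n \<Rightarrow> real" and R M L :: real
  assumes diff: "\<forall>z\<in>U. r differentiable (at z)"
    and lip: "derivative_Lipschitz_on U r L"
    and "L \<ge> 0"
    and neg: "\<forall>y\<in>\<Omega>. r y < 0" and R: "\<forall>x\<in>\<Omega>. norm x \<le> R"
    and M: "\<And>w. \<bar>frechet_derivative r (at z) w\<bar> \<le> M * norm w" and "M \<ge> 0"
    and ball: "ball z \<delta> \<subseteq> U" and l: "l \<in> disc_speeds \<Omega> z X"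
    and s: "0 < s" "s \<le> 1/4" "CARD('n) * (4 * (R + 1)) * s < \<delta>"
  shows "2 * l * cmod (dz_pair r z X) * s
           \<le> - r z + (M * (CARD('n) * (8 * (R + 1))) + L * (CARD('n) * (4 * (R + 1)))\<^sup>2) * s\<^sup>2"
proof -
  define K1 where "K1 = CARD('n) * (4 * (R + 1))"
  define K2 where "K2 = CARD('n) * (8 * (R + 1))"
  define a where "a = dz_pair r z X"
  define D where "D = frechet_derivative r (at z)"
  obtain f where "l > 0" and hf: "holo_disc_map f" and fim: "f ` ball 0 1 \<subseteq> \<Omega>" and "f 0 = z"
    and f'0: "(\<chi> j. deriv (\<lambda>w. f w $ j) 0) = complex_of_real l *s X"
    using l by (auto simp: disc_speeds_def)
  obtain u where "cmod u = 1" and ua: "u * a = complex_of_real (cmod a)"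
    using exists_unimodular_mult_eq_norm by blast
  define t where "t = complex_of_real s * u"
  have "cmod t = s" using \<open>cmod u = 1\<close> s by (simp add: t_def norm_mult)
  then have "t \<in> ball 0 1" "cmod t \<le> 1/4" using s by auto
  define y where "y = f t"
  define v where "v = (complex_of_real l * t) *s X"
  have bdf: "norm (f w) \<le> R" if "w \<in> ball 0 1" for w using fim R that by blast
  have near: "norm (y - z) \<le> K1 * s"
    using holo_disc_map_estimates(1)[OF hf bdf \<open>cmod t \<le> 1/4\<close>] \<open>f 0 = z\<close> \<open>cmod t = s\<close>
    by (simp add: y_def K1_def)
  have tangent: "norm (y - z - v) \<le> K2 * s\<^sup>2"
    using holo_disc_map_estimates(2)[OF hf bdf \<open>cmod t \<le> 1/4\<close>] \<open>f 0 = z\<close> \<open>cmod t = s\<close>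
    by (simp add: y_def K2_def v_def f'0 vector_smult_assoc mult.commute)
  have "z \<in> ball z \<delta>" "y \<in> ball z \<delta>"
    using near s(1,3) order.trans[OF norm_ge_zero near]
    by (auto simp: K1_def dist_norm norm_minus_commute)
  then have "closed_segment z y \<subseteq> U"
    using ball convex_ball[of z \<delta>] closed_segment_subset by blast
  then have "\<bar>r y - r z - D (y - z)\<bar> \<le> L * (norm (y - z))\<^sup>2"
    unfolding D_def by (rule Lipschitz_derivative_remainder_bound[OF diff lip \<open>L \<ge> 0\<close>])
  also have "\<dots> \<le> L * (K1 * s)\<^sup>2"
    using near \<open>L \<ge> 0\<close> by (intro mult_left_mono power_mono) auto
  also have "\<dots> = L * K1\<^sup>2 * s\<^sup>2" by (simp add: power_mult_distrib)
  finally have taylor: "\<bar>r y - r z - D (y - z)\<bar> \<le> L * K1\<^sup>2 * s\<^sup>2" .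
  have "z \<in> U" using \<open>z \<in> ball z \<delta>\<close> ball by blast
  then have "linear D"
    using diff frechet_derivative_works has_derivative_linear D_def by blast
  then have split: "D (y - z) = D v + D (y - z - v)" by (simp add: linear_diff)
  have "D v = Re (2 * (complex_of_real l * complex_of_real s * (u * a)))"
    using diff \<open>z \<in> U\<close> unfolding D_def a_def v_def t_def
    by (simp add: frechet_derivative_eq_Re_dz_pair dz_pair_scale mult_ac)
  then have first_order: "D v = 2 * l * s * cmod a" by (simp add: ua)
  have remainder: "\<bar>D (y - z - v)\<bar> \<le> M * (K2 * s\<^sup>2)"
    using M[of "y - z - v"] mult_left_mono[OF tangent \<open>M \<ge> 0\<close>] unfolding D_def by linarith
  have "y \<in> \<Omega>" using fim \<open>t \<in> ball 0 1\<close> unfolding y_def by blast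
  then have "r y < 0" using neg by blast
  then have "2 * l * cmod a * s \<le> - r z + (M * K2 + L * K1\<^sup>2) * s\<^sup>2"
    using split first_order taylor remainder by (simp add: algebra_simps)
  then show ?thesis unfolding a_def K1_def K2_def .
qed

text \<open>Take \<open>s = \<surd>e\<close> when this is admissible, and \<open>s = s\<^sub>0\<close> otherwise.\<close>
lemma le_sqrt_of_quadratic_bound:
  fixes A e s0 E C :: real
  assumes "e > 0" and "s0 > 0" and "e \<le> E" and "C \<ge> 0"
    and bound: "\<And>s. 0 < s \<Longrightarrow> s \<le> s0 \<Longrightarrow> A * s \<le> e + C * s\<^sup>2"
  shows "A \<le> (sqrt E / s0 + C + 1) * sqrt e"
proof -
  have "sqrt e > 0" using \<open>e > 0\<close> by simp
  have "sqrt E / s0 \<ge> 0" using assms by simp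
  show ?thesis
  proof (cases "sqrt e \<le> s0")
    case True
    have "sqrt e * A \<le> sqrt e * ((1 + C) * sqrt e)"
      using bound[OF \<open>sqrt e > 0\<close> True] \<open>e > 0\<close> by (simp add: algebra_simps)
    then have "A \<le> (1 + C) * sqrt e" using \<open>sqrt e > 0\<close> by simp
    also have "\<dots> \<le> (sqrt E / s0 + C + 1) * sqrt e"
      using \<open>sqrt E / s0 \<ge> 0\<close> \<open>sqrt e > 0\<close> by (simp add: mult_right_mono)
    finally show ?thesis .
  next
    case False
    have "A * s0 \<le> e + C * s0\<^sup>2" using bound[OF \<open>s0 > 0\<close> order_refl] .
    also have "e \<le> sqrt E * sqrt e"
      using mult_right_mono[OF real_sqrt_le_mono[OF \<open>e \<le> E\<close>] real_sqrt_ge_zero[of e]] \<open>e > 0\<close>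
      by simp
    also have "C * s0\<^sup>2 \<le> C * (s0 * sqrt e)"
      using False \<open>s0 > 0\<close> \<open>C \<ge> 0\<close> by (intro mult_left_mono) (simp_all add: power2_eq_square)
    finally have "s0 * A \<le> s0 * ((sqrt E / s0 + C) * sqrt e)"
      using \<open>s0 > 0\<close> by (simp add: algebra_simps)
    then have "A \<le> (sqrt E / s0 + C) * sqrt e" using \<open>s0 > 0\<close> by simp
    also have "\<dots> \<le> (sqrt E / s0 + C + 1) * sqrt e" using \<open>sqrt e > 0\<close> by simp
    finally show ?thesis .
  qed
qed

lemma C11_onE:
  fixes r :: "complex^'n \<Rightarrow> real"
  assumes "C11_on U r"
  obtains L where "L \<ge> 0" and "\<forall>z\<in>U. r differentiable (at z)"
    and "derivative_Lipschitz_on U r L"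
proof -
  obtain L where diff: "\<forall>z\<in>U. r differentiable (at z)"
    and lip: "derivative_Lipschitz_on U r L"
    using assms unfolding C11_on_def derivative_Lipschitz_on_def by blast
  have "L * dist z w \<le> \<bar>L\<bar> * dist z w" for z w :: "complex^'n"
    by (intro mult_right_mono) auto
  then show thesis
    using that[of "\<bar>L\<bar>"] diff lip unfolding derivative_Lipschitz_on_def
    by (meson abs_ge_zero order_trans)
qed

lemma C11_on_imp_continuous_on: "C11_on U r \<Longrightarrow> continuous_on U r"
  unfolding C11_on_def
  by (meson continuous_at_imp_continuous_on differentiable_imp_continuous_within)

lemma frechet_derivative_bounded_on_bounded:
  fixes r :: "'a::real_normed_vector \<Rightarrow> real"
  assumes diff: "\<forall>z\<in>U. r differentiable (at z)"
    and lip: "derivative_Lipschitz_on U r L"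
    and "L \<ge> 0" and "bounded S" and "S \<subseteq> U"
  shows "\<exists>M\<ge>0. \<forall>z\<in>S. \<forall>w. \<bar>frechet_derivative r (at z) w\<bar> \<le> M * norm w"
proof (cases "S = {}")
  case False
  then obtain z0 where "z0 \<in> S" by blast
  obtain d where d: "\<forall>z\<in>S. dist z0 z \<le> d"
    using \<open>bounded S\<close> bounded_any_center by blast
  have lin: "bounded_linear (frechet_derivative r (at z))" if "z \<in> U" for z
    using diff that frechet_derivative_works has_derivative_bounded_linear by blast
  define M where "M = onorm (frechet_derivative r (at z0)) + L * d"
  have "\<bar>frechet_derivative r (at z) w\<bar> \<le> M * norm w" if "z \<in> S" for z w
  proof -
    have "z \<in> U" "z0 \<in> U" using that \<open>z0 \<in> S\<close> \<open>S \<subseteq> U\<close> by auto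
    have "\<bar>frechet_derivative r (at z) w - frechet_derivative r (at z0) w\<bar>
          \<le> onorm (\<lambda>v. frechet_derivative r (at z) v - frechet_derivative r (at z0) v) * norm w"
      using onorm[OF bounded_linear_sub[OF lin lin], OF \<open>z \<in> U\<close> \<open>z0 \<in> U\<close>] by simp
    also have "\<dots> \<le> L * d * norm w"
    proof (rule mult_right_mono)
      have "onorm (\<lambda>v. frechet_derivative r (at z) v - frechet_derivative r (at z0) v) \<le> L * dist z z0"
        using lip \<open>z \<in> U\<close> \<open>z0 \<in> U\<close> unfolding derivative_Lipschitz_on_def by blast
      also have "\<dots> \<le> L * d" using d that \<open>L \<ge> 0\<close> by (intro mult_left_mono) (auto simp: dist_commute)
      finally show "onorm (\<lambda>v. frechet_derivative r (at z) v - frechet_derivative r (at z0) v) \<le> L * d" .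
    qed simp
    finally show ?thesis
      using onorm[OF lin[OF \<open>z0 \<in> U\<close>], of w] by (simp add: M_def algebra_simps)
  qed
  moreover have "M \<ge> 0"
  proof -
    have "d \<ge> 0" using d \<open>z0 \<in> S\<close> by (metis dist_self)
    then show ?thesis
      using onorm_pos_le[OF lin] \<open>z0 \<in> S\<close> \<open>S \<subseteq> U\<close> \<open>L \<ge> 0\<close> by (auto simp: M_def)
  qed
  ultimately show ?thesis by blast
qed auto

lemma disc_speed_sqrt_bound:
  fixes \<Omega> U :: "(complex^'n) set" and r :: "complex^'n \<Rightarrow> real"
  assumes "open U" and "closure \<Omega> \<subseteq> U" and "C11_on U r"
    and \<Omega>: "\<Omega> = {z\<in>U. r z < 0}" and "bounded \<Omega>"
  shows "\<exists>K>0. \<forall>z\<in>\<Omega>. \<forall>X. \<forall>l\<in>disc_speeds \<Omega> z X.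
           2 * l * cmod (dz_pair r z X) \<le> K * sqrt (- r z)"
proof -
  obtain L where "L \<ge> 0" and diff: "\<forall>z\<in>U. r differentiable (at z)"
    and lip: "derivative_Lipschitz_on U r L"
    using C11_onE[OF \<open>C11_on U r\<close>] by blast
  have "compact (closure \<Omega>)" using \<open>bounded \<Omega>\<close> by (simp add: compact_closure)
  then obtain \<delta> where "\<delta> > 0" and balls: "(\<Union>x\<in>closure \<Omega>. ball x \<delta>) \<subseteq> U"
    using compact_subset_open_imp_ball_epsilon_subset \<open>open U\<close> \<open>closure \<Omega> \<subseteq> U\<close> by metis
  obtain R where "R > 0" and R: "\<forall>x\<in>\<Omega>. norm x \<le> R"
    using \<open>bounded \<Omega>\<close> bounded_pos by blast
  have "bounded (r ` closure \<Omega>)"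
    using C11_on_imp_continuous_on[OF \<open>C11_on U r\<close>] \<open>compact (closure \<Omega>)\<close> \<open>closure \<Omega> \<subseteq> U\<close>
    by (meson compact_continuous_image compact_imp_bounded continuous_on_subset)
  then obtain E where "E > 0" and E: "\<forall>z\<in>\<Omega>. \<bar>r z\<bar> \<le> E"
    using closure_subset by (fastforce simp: bounded_pos)
  obtain M where "M \<ge> 0" and M: "\<forall>z\<in>\<Omega>. \<forall>w. \<bar>frechet_derivative r (at z) w\<bar> \<le> M * norm w"
    using frechet_derivative_bounded_on_bounded[OF diff lip \<open>L \<ge> 0\<close> \<open>bounded \<Omega>\<close>] \<Omega> by blast
  define K1 where "K1 = CARD('n) * (4 * (R + 1))"
  define K2 where "K2 = CARD('n) * (8 * (R + 1))"
  define s0 where "s0 = min (1/4) (\<delta> / (K1 + 1))"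
  define C where "C = M * K2 + L * K1\<^sup>2"
  have "K1 \<ge> 0" "K2 \<ge> 0" using \<open>R > 0\<close> by (simp_all add: K1_def K2_def)
  then have "s0 > 0" "C \<ge> 0"
    using \<open>\<delta> > 0\<close> \<open>M \<ge> 0\<close> \<open>L \<ge> 0\<close> by (simp_all add: s0_def C_def)
  have "2 * l * cmod (dz_pair r z X) \<le> (sqrt E / s0 + C + 1) * sqrt (- r z)"
    if "z \<in> \<Omega>" and l: "l \<in> disc_speeds \<Omega> z X" for z X l
  proof (rule le_sqrt_of_quadratic_bound)
    show "- r z > 0" "- r z \<le> E" using that \<Omega> E by force+
    fix s assume "0 < s" "s \<le> s0"
    then have "s \<le> 1/4" and "K1 * s < \<delta>"
      using \<open>K1 \<ge> 0\<close> \<open>\<delta> > 0\<close> by (auto simp: s0_def field_simps)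
    moreover have "ball z \<delta> \<subseteq> U" using balls \<open>z \<in> \<Omega>\<close> closure_subset by blast
    ultimately show "2 * l * cmod (dz_pair r z X) * s \<le> - r z + C * s\<^sup>2"
      using disc_speed_quadratic_bound[OF diff lip \<open>L \<ge> 0\<close> _ R _ \<open>M \<ge> 0\<close> _ l \<open>0 < s\<close>]
        M \<Omega> \<open>z \<in> \<Omega>\<close> unfolding C_def K1_def K2_def by blast
  qed (use \<open>s0 > 0\<close> \<open>C \<ge> 0\<close> in auto)
  moreover have "sqrt E / s0 + C + 1 > 0"
    using \<open>s0 > 0\<close> \<open>C \<ge> 0\<close> \<open>E > 0\<close> by (simp add: add_nonneg_pos)
  ultimately show ?thesis by blast
qed

theorem theorem2p5:
  fixes \<Omega> U :: "(complex^'n) set" and r :: "complex^'n \<Rightarrow> real"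
  assumes "open U" and "closure \<Omega> \<subseteq> U"
    and "C11_on U r"
    and "\<Omega> = {z\<in>U. r z < 0}"
    and "bounded \<Omega>" and "connected \<Omega>" and "\<Omega> \<noteq> {}"
    and "\<forall>p\<in>frontier \<Omega>. frechet_derivative r (at p) \<noteq> (\<lambda>v. 0)"
  shows "\<exists>C>0. \<forall>z\<in>\<Omega>. \<forall>X.
           kobayashi \<Omega> z X \<ge> C * cmod (dz_pair r z X) / sqrt \<bar>r z\<bar>"
proof -
  obtain K where "K > 0" and K: "\<forall>z\<in>\<Omega>. \<forall>X. \<forall>l\<in>disc_speeds \<Omega> z X.
                                  2 * l * cmod (dz_pair r z X) \<le> K * sqrt (- r z)"
    using disc_speed_sqrt_bound[OF assms(1-5)] by blast
  have "\<Omega> = U \<inter> r -` {..<0}" using assms(4) by auto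
  then have "open \<Omega>"
    using continuous_open_preimage[OF C11_on_imp_continuous_on[OF assms(3)] assms(1)] by simp
  have "2 / K * cmod (dz_pair r z X) / sqrt \<bar>r z\<bar> \<le> kobayashi \<Omega> z X" if "z \<in> \<Omega>" for z X
  proof -
    have "r z < 0" using that assms(4) by blast
    have "2 * cmod (dz_pair r z X) / (K * sqrt (- r z)) \<le> kobayashi \<Omega> z X"
    proof (rule kobayashi_ge_divide)
      show "z \<in> interior \<Omega>" using that \<open>open \<Omega>\<close> by (simp add: interior_open)
      show "K * sqrt (- r z) > 0" using \<open>K > 0\<close> \<open>r z < 0\<close> by simp
      show "l * (2 * cmod (dz_pair r z X)) \<le> K * sqrt (- r z)" if "l \<in> disc_speeds \<Omega> z X" for l
        using K \<open>z \<in> \<Omega>\<close> that by (simp add: mult_ac)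
    qed
    then show ?thesis using \<open>r z < 0\<close> by simp
  qed
  then show ?thesis using \<open>K > 0\<close> by (intro exI[of _ "2 / K"]) auto
qed

end
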